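(* Let $a_0,b_0,C_0,C_1,g_3,z_0$ be complex constants with $b_0\neq0$, put $$g_2=\frac{C_0^2+24C_1b_0}{12b_0^2},$$ and let $R(z)=\wp(z-z_0;g_2,g_3)$. Then the function $$y(z)=-\frac{C_0}{12b_0}+R(z)$$ is a solution of the third order ordinary differential equation $$a_0y_{zzz}-12a_0yy_z+b_0y_{zz}-\frac{a_0C_0}{b_0}y_z-6b_0y^2-C_0y+C_1=0 .$$
   Context: $\wp(z;g_2,g_3)$ denotes the Weierstrass elliptic function with invariants $g_2,g_3$, the general solution (up to translation of $z$) of $R_z^2-4R^3+g_2R+g_3=0$; subscripts $z$ denote derivatives with respect to $z$. *)

theory Defs
  imports "HOL-Complex_Analysis.Complex_Analysis"
begin

text \<open>A branch of the Weierstrass function wp(.; g2, g3): a non-constant holomorphic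
  solution on an open connected region S (avoiding poles) of
  R_z^2 = 4 R^3 - g2 R - g3. By the context, every non-constant solution is a
  translate of wp, and conversely wp restricted to any such region is one.\<close>
definition weierstrass_branch ::
  "complex \<Rightarrow> complex \<Rightarrow> (complex \<Rightarrow> complex) \<Rightarrow> complex set \<Rightarrow> bool" where
  "weierstrass_branch g2 g3 P S \<longleftrightarrow>
     open S \<and> connected S \<and> P holomorphic_on S \<and>
     \<not> (\<exists>c. \<forall>w\<in>S. P w = c) \<and>
     (\<forall>w\<in>S. (deriv P w)^2 = 4 * (P w)^3 - g2 * P w - g3)"

end

theory Submission
  imports Defs
begin

text \<open>Differentiating R'^2 = 4R^3 - g2 R - g3 gives R' (2R'' - 12R^2 + g2) = 0; since R' is
  not identically zero, the identity theorem yields R'' = 6R^2 - g2/2 and hence R''' = 12 R R'.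
  For y = R - C0/(12 b0) the terms in R' then cancel, and the remaining constant vanishes
  precisely because g2 = (C0^2 + 24 C1 b0)/(12 b0^2).\<close>

lemma holomorphic_mult_eq_0_imp_eq_0:
  assumes "open S" "connected S" "f holomorphic_on S" "g holomorphic_on S"
    and fg: "\<And>w. w \<in> S \<Longrightarrow> f w * g w = 0"
    and "w0 \<in> S" "f w0 \<noteq> 0" "w \<in> S"
  shows "g w = 0"
proof (rule analytic_continuation_open[where f = g and g = "\<lambda>_. 0"])
  show "open (S \<inter> f -` (- {0}))"
    using assms by (intro continuous_open_preimage holomorphic_on_imp_continuous_on) auto
qed (use assms in auto)

lemma holomorphic_nonconstant_imp_deriv_nonzero:
  assumes "open S" "connected S" "f holomorphic_on S" "\<not> (\<exists>c. \<forall>w\<in>S. f w = c)"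
  obtains w where "w \<in> S" "deriv f w \<noteq> 0"
proof (rule ccontr)
  assume "\<not> thesis"
  then have "\<forall>w\<in>S. DERIV f w :> 0"
    using that assms holomorphic_derivI by fastforce
  then obtain c where "\<And>w. w \<in> S \<Longrightarrow> f w = c"
    using DERIV_zero_connected_constant[of S "{}" f] assms holomorphic_on_imp_continuous_on
    by auto
  then show False
    using assms(4) by auto
qed

lemma weierstrass_branch_differentiated:
  assumes wb: "weierstrass_branch g2 g3 P S" and x: "x \<in> S"
  shows "deriv P x * (2 * deriv (deriv P) x - 12 * (P x)^2 + g2) = 0"
proof -
  have S: "open S" and hP: "P holomorphic_on S"
    and ode: "\<And>w. w \<in> S \<Longrightarrow> (deriv P w)^2 = 4 * (P w)^3 - g2 * P w - g3"
    using wb unfolding weierstrass_branch_def by auto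
  have dP: "(P has_field_derivative deriv P x) (at x)"
    and dP': "(deriv P has_field_derivative deriv (deriv P) x) (at x)"
    using hP S x by (auto intro: holomorphic_derivI holomorphic_deriv)
  have "((\<lambda>x. (deriv P x)^2) has_field_derivative 2 * deriv P x * deriv (deriv P) x) (at x)"
    by (rule derivative_eq_intros dP' refl)+ (simp add: algebra_simps)
  moreover have "((\<lambda>x. (deriv P x)^2) has_field_derivative (12 * (P x)^2 - g2) * deriv P x) (at x)"
  proof (rule has_field_derivative_transform_within_open[OF _ S x])
    show "((\<lambda>x. 4 * (P x)^3 - g2 * P x - g3) has_field_derivative (12 * (P x)^2 - g2) * deriv P x) (at x)"
      by (rule derivative_eq_intros dP refl)+ (simp add: algebra_simps)
  qed (use ode in auto)
  ultimately have "2 * deriv P x * deriv (deriv P) x = (12 * (P x)^2 - g2) * deriv P x"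
    by (rule DERIV_unique)
  then show ?thesis
    by (simp add: algebra_simps)
qed

lemma weierstrass_branch_deriv2:
  assumes wb: "weierstrass_branch g2 g3 P S" and "w \<in> S"
  shows "(deriv ^^ 2) P w = 6 * (P w)^2 - g2 / 2"
proof -
  have S: "open S" "connected S" and hP: "P holomorphic_on S"
    and nonconstant: "\<not> (\<exists>c. \<forall>w\<in>S. P w = c)"
    using wb unfolding weierstrass_branch_def by auto
  have hP': "deriv P holomorphic_on S" and hP'': "deriv (deriv P) holomorphic_on S"
    using hP S by (auto intro: holomorphic_deriv)
  obtain w0 where "w0 \<in> S" "deriv P w0 \<noteq> 0"
    using holomorphic_nonconstant_imp_deriv_nonzero[OF S hP nonconstant] .
  moreover have "(\<lambda>x. 2 * deriv (deriv P) x - 12 * (P x)^2 + g2) holomorphic_on S"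
    using hP hP'' S(1) by (intro holomorphic_intros)
  ultimately have "2 * deriv (deriv P) w - 12 * (P w)^2 + g2 = 0"
    using holomorphic_mult_eq_0_imp_eq_0[OF S hP'] weierstrass_branch_differentiated[OF wb]
      \<open>w \<in> S\<close>
    by blast
  then show ?thesis
    by (simp add: numeral_2_eq_2 field_simps)
qed

lemma weierstrass_branch_deriv3:
  assumes wb: "weierstrass_branch g2 g3 P S" and w: "w \<in> S"
  shows "(deriv ^^ 3) P w = 12 * P w * deriv P w"
proof -
  have S: "open S" and hP: "P holomorphic_on S"
    using wb unfolding weierstrass_branch_def by auto
  have "(deriv ^^ 3) P w = deriv ((deriv ^^ 2) P) w"
    by (simp add: numeral_3_eq_3 numeral_2_eq_2)
  also have "\<dots> = deriv (\<lambda>x. 6 * (P x)^2 - g2 / 2) w"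
    using weierstrass_branch_deriv2[OF wb] hP S w
    by (intro complex_derivative_transform_within_open[where s = S] holomorphic_intros) auto
  also have "\<dots> = 12 * P w * deriv P w"
  proof (rule DERIV_imp_deriv)
    have dP: "(P has_field_derivative deriv P w) (at w)"
      using hP S w by (auto intro: holomorphic_derivI)
    show "((\<lambda>x. 6 * (P x)^2 - g2 / 2) has_field_derivative 12 * P w * deriv P w) (at w)"
      by (rule derivative_eq_intros dP refl)+ (simp add: algebra_simps)
  qed
  finally show ?thesis .
qed

lemma higher_deriv_const_plus_translate:
  assumes "open S" "g holomorphic_on S" "z - z0 \<in> S"
  shows "(deriv ^^ Suc n) (\<lambda>z. c + g (z - z0)) z = (deriv ^^ Suc n) g (z - z0)"
proof -
  have "(deriv ^^ Suc n) (\<lambda>z. (\<lambda>w. c + g w) (1 * z + - z0)) z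
      = 1 ^ Suc n * (deriv ^^ Suc n) (\<lambda>w. c + g w) (1 * z + - z0)"
    using assms
    by (intro higher_deriv_compose_linear'[where S = "(\<lambda>z. z - z0) -` S"] holomorphic_intros
        open_vimage continuous_intros) auto
  also have "\<dots> = (deriv ^^ Suc n) (\<lambda>w. c) (z - z0) + (deriv ^^ Suc n) g (z - z0)"
    by (simp add: higher_deriv_add[where S = S] assms del: funpow.simps)
  also have "\<dots> = (deriv ^^ Suc n) g (z - z0)"
    by simp
  finally show ?thesis
    by simp
qed

theorem mainTheorem3:
  fixes a0 b0 C0 C1 g3 z0 :: complex
    and P :: "complex \<Rightarrow> complex" and S :: "complex set"
  assumes "b0 \<noteq> 0"
    and "weierstrass_branch ((C0^2 + 24 * C1 * b0) / (12 * b0^2)) g3 P S"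
  shows "\<forall>z. z - z0 \<in> S \<longrightarrow>
    (let y = (\<lambda>z. - C0 / (12 * b0) + P (z - z0)) in
      a0 * (deriv ^^ 3) y z - 12 * a0 * y z * deriv y z + b0 * (deriv ^^ 2) y z
      - a0 * C0 / b0 * deriv y z - 6 * b0 * (y z)^2 - C0 * y z + C1 = 0)"
proof (intro allI impI)
  fix z assume z: "z - z0 \<in> S"
  define g2 where "g2 = (C0^2 + 24 * C1 * b0) / (12 * b0^2)"
  define c where "c = - C0 / (12 * b0)"
  define y where "y = (\<lambda>z. c + P (z - z0))"
  have wb: "weierstrass_branch g2 g3 P S"
    using assms(2) g2_def by simp
  have "open S" "P holomorphic_on S"
    using wb unfolding weierstrass_branch_def by auto
  then have dy: "(deriv ^^ Suc n) y z = (deriv ^^ Suc n) P (z - z0)" for n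
    unfolding y_def using z by (rule higher_deriv_const_plus_translate)
  define R where "R = P (z - z0)"
  define R' where "R' = deriv P (z - z0)"
  have "y z = c + R"
    by (simp add: y_def R_def)
  moreover have "deriv y z = R'"
    using dy[of 0] by (simp add: R'_def)
  moreover have "(deriv ^^ 2) y z = 6 * R^2 - g2 / 2"
    using dy[of 1] weierstrass_branch_deriv2[OF wb z] by (simp add: R_def numeral_2_eq_2)
  moreover have "(deriv ^^ 3) y z = 12 * R * R'"
    using dy[of 2] weierstrass_branch_deriv3[OF wb z] by (simp add: R_def R'_def numeral_3_eq_3)
  moreover have "a0 * (12 * R * R') - 12 * a0 * (c + R) * R' + b0 * (6 * R^2 - g2 / 2)
      - a0 * C0 / b0 * R' - 6 * b0 * (c + R)^2 - C0 * (c + R) + C1 = 0"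
    unfolding c_def g2_def using assms(1) by (simp add: field_simps power2_eq_square)
  ultimately have "a0 * (deriv ^^ 3) y z - 12 * a0 * y z * deriv y z + b0 * (deriv ^^ 2) y z
      - a0 * C0 / b0 * deriv y z - 6 * b0 * (y z)^2 - C0 * y z + C1 = 0"
    by simp
  then show "let y = (\<lambda>z. - C0 / (12 * b0) + P (z - z0)) in
      a0 * (deriv ^^ 3) y z - 12 * a0 * y z * deriv y z + b0 * (deriv ^^ 2) y z
      - a0 * C0 / b0 * deriv y z - 6 * b0 * (y z)^2 - C0 * y z + C1 = 0"
    unfolding y_def c_def Let_def .
qed

end
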